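(* Let $f\in{\rm elh}(\mathbb{C})$ be non-polynomial and $g\in{\rm elh}(\mathbb{C})$, and suppose there is $h_1\in{\rm elh}(\mathbb{C})$ with $h_1\neq g$ and $f\circ h_1=f\circ g$. Let $t(z)$ be entire and $h(z,w)$ entire on $\mathbb{C}^2$ with $f(g(z)+we^{t(z)})=f(g(z))+e^{h(z,w)}\sin\pi w$ for all $(z,w)$. Then there exists an entire function $k(z,w)$ on $\mathbb{C}^2$ such that $$\frac{\partial h}{\partial w}(z,w)\sin\pi w+\pi\cos\pi w=e^{k(z,w)}.$$
   Context: ${\rm elh}(\mathbb{C})$ denotes the set of entire functions with nowhere vanishing derivative and derivative $1$ at $0$. *)

theory Defs
  imports "HOL-Complex_Analysis.Complex_Analysis" "HOL-Computational_Algebra.Polynomial"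
begin

definition elh :: "(complex \<Rightarrow> complex) set" where
  "elh = {f. f holomorphic_on UNIV \<and> (\<forall>z. deriv f z \<noteq> 0) \<and> deriv f 0 = 1}"

definition is_polynomial_fun :: "(complex \<Rightarrow> complex) \<Rightarrow> bool" where
  "is_polynomial_fun f \<longleftrightarrow> (\<exists>p :: complex poly. \<forall>z. f z = poly p z)"

definition entire2 :: "(complex \<times> complex \<Rightarrow> complex) \<Rightarrow> bool" where
  "entire2 h \<longleftrightarrow> (\<forall>p. \<exists>a b. (h has_derivative (\<lambda>(u, v). a * u + b * v)) (at p))"

end

theory Submission
  imports Defs
begin

text \<open>Differentiating the hypothesis in \<open>w\<close> gives
  \<open>f'(g z + w exp (t z)) exp (t z) = exp (h (z, w)) (h_w sin (\<pi> w) + \<pi> cos (\<pi> w))\<close>.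
  As \<open>f'\<close> is entire and zero-free it has an entire logarithm \<open>\<phi>\<close>, so the left-hand
  side of the claim is \<open>exp (\<phi> (g z + w exp (t z)) + t z - h (z, w))\<close>, whose exponent is
  entire on \<open>\<complex>\<^sup>2\<close>.\<close>

lemma entire2_fst: "entire2 fst"
  unfolding entire2_def
proof (intro allI exI)
  fix p :: "complex \<times> complex"
  show "(fst has_derivative (\<lambda>(u, v). 1 * u + 0 * v)) (at p)"
    by (rule has_derivative_eq_rhs[OF has_derivative_fst[OF has_derivative_ident]]) auto
qed

lemma entire2_snd: "entire2 snd"
  unfolding entire2_def
proof (intro allI exI)
  fix p :: "complex \<times> complex"
  show "(snd has_derivative (\<lambda>(u, v). 0 * u + 1 * v)) (at p)"
    by (rule has_derivative_eq_rhs[OF has_derivative_snd[OF has_derivative_ident]]) auto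
qed

lemma entire2_add:
  assumes "entire2 a" "entire2 b"
  shows "entire2 (\<lambda>p. a p + b p)"
  unfolding entire2_def
proof
  fix p
  obtain a1 b1 where A: "(a has_derivative (\<lambda>(u, v). a1 * u + b1 * v)) (at p)"
    using assms(1) unfolding entire2_def by blast
  obtain a2 b2 where B: "(b has_derivative (\<lambda>(u, v). a2 * u + b2 * v)) (at p)"
    using assms(2) unfolding entire2_def by blast
  show "\<exists>c d. ((\<lambda>p. a p + b p) has_derivative (\<lambda>(u, v). c * u + d * v)) (at p)"
    by (rule exI[of _ "a1 + a2"], rule exI[of _ "b1 + b2"],
        rule has_derivative_eq_rhs[OF has_derivative_add[OF A B]]) (auto simp: algebra_simps)
qed

lemma entire2_mult:
  assumes "entire2 a" "entire2 b"
  shows "entire2 (\<lambda>p. a p * b p)"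
  unfolding entire2_def
proof
  fix p
  obtain a1 b1 where A: "(a has_derivative (\<lambda>(u, v). a1 * u + b1 * v)) (at p)"
    using assms(1) unfolding entire2_def by blast
  obtain a2 b2 where B: "(b has_derivative (\<lambda>(u, v). a2 * u + b2 * v)) (at p)"
    using assms(2) unfolding entire2_def by blast
  show "\<exists>c d. ((\<lambda>p. a p * b p) has_derivative (\<lambda>(u, v). c * u + d * v)) (at p)"
    by (rule exI[of _ "a p * a2 + a1 * b p"], rule exI[of _ "a p * b2 + b1 * b p"],
        rule has_derivative_eq_rhs[OF has_derivative_mult[OF A B]]) (auto simp: algebra_simps)
qed

lemma entire2_comp:
  assumes F: "F holomorphic_on UNIV" and "entire2 a"
  shows "entire2 (\<lambda>p. F (a p))"
  unfolding entire2_def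
proof
  fix p
  obtain a1 b1 where A: "(a has_derivative (\<lambda>(u, v). a1 * u + b1 * v)) (at p)"
    using assms(2) unfolding entire2_def by blast
  have D: "(F has_derivative (*) (deriv F (a p))) (at (a p))"
    using holomorphic_derivI[OF F] by (auto intro: has_field_derivative_imp_has_derivative)
  show "\<exists>c d. ((\<lambda>p. F (a p)) has_derivative (\<lambda>(u, v). c * u + d * v)) (at p)"
    by (rule exI[of _ "deriv F (a p) * a1"], rule exI[of _ "deriv F (a p) * b1"],
        rule has_derivative_eq_rhs[OF diff_chain_at[OF A D, unfolded o_def]])
       (auto simp: algebra_simps)
qed

lemma entire2_diff:
  assumes "entire2 a" "entire2 b"
  shows "entire2 (\<lambda>p. a p - b p)"
proof -
  have "entire2 (\<lambda>p. - b p)"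
    by (rule entire2_comp[OF _ assms(2)]) (auto intro: holomorphic_intros)
  from entire2_add[OF assms(1) this] show ?thesis
    by simp
qed

lemma entire2_field_differentiable_snd:
  assumes "entire2 h"
  shows "(\<lambda>w. h (z, w)) field_differentiable at w"
proof -
  obtain a b where A: "(h has_derivative (\<lambda>(u, v). a * u + b * v)) (at (z, w))"
    using assms unfolding entire2_def by blast
  have "((\<lambda>w. (z, w)) has_derivative (\<lambda>v. (0, v))) (at w)"
    by (rule has_derivative_eq_rhs[OF has_derivative_Pair[OF has_derivative_const has_derivative_ident]])
       auto
  from diff_chain_at[OF this A, unfolded o_def]
  have "((\<lambda>w. h (z, w)) has_derivative (*) b) (at w)"
    by (rule has_derivative_eq_rhs) auto
  then show ?thesis
    unfolding field_differentiable_def has_field_derivative_def by blast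
qed

lemma deriv_of_sin_factorization:
  fixes F H :: "complex \<Rightarrow> complex" and b c d e w :: complex
  assumes F: "F holomorphic_on UNIV"
    and eq: "\<And>w::complex. F (c + w * e) = d + exp (H w) * sin (pi * w)"
    and H: "(H has_field_derivative b) (at w)"
  shows "deriv F (c + w * e) * e = exp (H w) * (b * sin (pi * w) + pi * cos (pi * w))"
proof -
  have "((\<lambda>w. c + w * e) has_field_derivative e) (at w)"
    by (auto intro!: derivative_eq_intros)
  from DERIV_chain2[OF holomorphic_derivI[OF F, of "c + w * e"] this]
  have L: "((\<lambda>w. F (c + w * e)) has_field_derivative deriv F (c + w * e) * e) (at w)"
    by simp
  have R: "((\<lambda>w. d + exp (H w) * sin (pi * w)) has_field_derivative
      exp (H w) * (b * sin (pi * w) + pi * cos (pi * w))) (at w)"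
    by (auto intro!: derivative_eq_intros H simp: algebra_simps)
  have eq_fun: "(\<lambda>w::complex. F (c + w * e)) = (\<lambda>w::complex. d + exp (H w) * sin (pi * w))"
    using eq by auto
  show ?thesis
    using DERIV_unique[OF L R[folded eq_fun]] .
qed

theorem proposition3p26:
  fixes f g h1 t :: "complex \<Rightarrow> complex" and h :: "complex \<times> complex \<Rightarrow> complex"
  assumes "f \<in> elh" and "\<not> is_polynomial_fun f" and "g \<in> elh"
    and "h1 \<in> elh" and "h1 \<noteq> g" and "f \<circ> h1 = f \<circ> g"
    and "t holomorphic_on UNIV" and "entire2 h"
    and "\<And>z (w::complex). f (g z + w * exp (t z)) = f (g z) + exp (h (z, w)) * sin (pi * w)"
  shows "\<exists>k. entire2 k \<and>
    (\<forall>z (w::complex). deriv (\<lambda>w'. h (z, w')) w * sin (pi * w) + pi * cos (pi * w) = exp (k (z, w)))"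
proof -
  have f: "f holomorphic_on UNIV" "\<And>z. deriv f z \<noteq> 0" and g: "g holomorphic_on UNIV"
    using assms(1,3) by (auto simp: elh_def)
  obtain \<phi> where \<phi>: "\<phi> holomorphic_on UNIV" "\<And>z. exp (\<phi> z) = deriv f z"
    using holomorphic_logarithm_exists[of UNIV "deriv f" 0] holomorphic_deriv[OF f(1)] f(2) by auto
  define k where "k = (\<lambda>p. \<phi> (g (fst p) + snd p * exp (t (fst p))) + t (fst p) - h p)"
  have "entire2 k"
    unfolding k_def
    by (intro entire2_diff entire2_add entire2_comp[OF \<phi>(1)] entire2_comp[OF g] entire2_mult
        entire2_snd entire2_comp[of exp] entire2_comp[OF assms(7)] entire2_fst assms(8))
       (auto intro: holomorphic_intros)
  moreover have "deriv (\<lambda>w'. h (z, w')) w * sin (pi * w) + pi * cos (pi * w) = exp (k (z, w))"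
    for z w :: complex
  proof -
    have "deriv f (g z + w * exp (t z)) * exp (t z) =
        exp (h (z, w)) * (deriv (\<lambda>w'. h (z, w')) w * sin (pi * w) + pi * cos (pi * w))"
      using deriv_of_sin_factorization[OF f(1) assms(9)]
        field_differentiable_derivI[OF entire2_field_differentiable_snd[OF assms(8)]] .
    then show ?thesis
      by (simp add: k_def exp_diff exp_add \<phi>(2) field_simps)
  qed
  ultimately show ?thesis by blast
qed

end
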